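(* There exists a strictly increasing sequence $(n_k)_{k\ge0}$ of positive integers with $n_{k+1}/n_k\to1$ as $k\to\infty$ which is a rigidity sequence; i.e. there is a continuous Borel probability measure $\sigma$ on $\mathbb{T}$ with $\hat\sigma(n_k)\to1$.
   Context: $\hat\sigma(n)=\int_{\mathbb{T}}\lambda^n\,d\sigma(\lambda)$; continuous means atomless. A strictly increasing sequence $(n_k)$ of positive integers is a rigidity sequence if there exist a probability space and a measure-preserving transformation $\varphi$ that is weakly mixing and rigid with respect to $(n_k)$ (i.e. $\mu(\varphi^{-n_k}(A)\triangle A)\to0$ for all measurable $A$); equivalently, if there is a continuous probability measure $\sigma$ on $\mathbb{T}$ with $\hat\sigma(n_k)\to1$. *)

theory Defs
  imports "HOL-Probability.Probability"
begin

text \<open>The circle group T is represented as the unit circle in the complex plane.\<close>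

definition circle_prob_measure :: "complex measure \<Rightarrow> bool" where
  "circle_prob_measure \<sigma> \<longleftrightarrow>
     prob_space \<sigma> \<and> sets \<sigma> = sets borel \<and> emeasure \<sigma> (sphere 0 1) = 1"

text \<open>Continuous = atomless.\<close>
definition continuous_measure :: "complex measure \<Rightarrow> bool" where
  "continuous_measure \<sigma> \<longleftrightarrow> (\<forall>z. emeasure \<sigma> {z} = 0)"

definition fourier_coeff :: "complex measure \<Rightarrow> nat \<Rightarrow> complex" where
  "fourier_coeff \<sigma> n = (\<integral>z. z ^ n \<partial>\<sigma>)"

definition rigidity_sequence :: "(nat \<Rightarrow> nat) \<Rightarrow> bool" where
  "rigidity_sequence nk \<longleftrightarrow> strict_mono nk \<and> (\<forall>k. 0 < nk k) \<and>
     (\<exists>\<sigma>. circle_prob_measure \<sigma> \<and> continuous_measure \<sigma> \<and>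
          (\<lambda>k. fourier_coeff \<sigma> (nk k)) \<longlonglongrightarrow> 1)"

end

theory Submission
  imports Defs
begin

(* Fix a rapidly growing chain of divisors M_0 | M_1 | ..., with M_(l+1) = M_l * 2^(2l+3).
   Toss independent coins w_l with success probability 1/(l+2) and put
   phase(w) = sum_l w_l / M_l in [0, 1/2]; sigma is the law of exp(2 pi i phase(w)).
   - Continuity: phase is injective, so an atom of sigma is the image of a single coin
     sequence, whose probability is at most prod_(l<L) (1 - 1/(l+2)) = 1/(L+1) for every L.
   - Rigidity: if M_i divides n then n * phase(w) is an integer plus n times the tail
     sum_(l>i) w_l/M_l; discarding the event w_(i+1) = 1 (probability 1/(i+3)) the tail is at
     most 2/M_(i+2), hence |1 - sigma^(n)| <= 2/(i+3) + 4 pi n / M_(i+2).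
   - The sequence: in block i it runs through the multiples of M_i from 2^i M_i up to
     2^(i+1) M_(i+1).  Consecutive ratios are at most 1 + 2^(-i), and n / M_(i+2) <= 2^(-i). *)

section \<open>The divisor chain\<close>

primrec scale :: "nat \<Rightarrow> nat" where
  "scale 0 = 4"
| "scale (Suc l) = scale l * 2 ^ (2 * l + 3)"

lemma scale_pos: "0 < scale l"
  by (induction l) auto

lemma scale_Suc_ge: "8 * scale l \<le> scale (Suc l)"
proof -
  have "(8::nat) \<le> 2 ^ (2 * l + 3)"
    using power_increasing[of 3 "2 * l + 3" "2::nat"] by simp
  then show ?thesis by simp
qed

text \<open>Consequently \<open>M\<^sub>l\<^sub>+\<^sub>j \<ge> 2\<^sup>l M\<^sub>j\<close>, which makes the phase series geometric.\<close>
lemma scale_growth: "2 ^ l * scale j \<le> scale (l + j)"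
proof (induction l)
  case (Suc l)
  have "2 * (2 ^ l * scale j) \<le> 8 * scale (l + j)" using Suc by linarith
  also have "\<dots> \<le> scale (Suc (l + j))" by (rule scale_Suc_ge)
  finally show ?case by (metis add_Suc mult.assoc power_Suc)
qed simp

lemma scale_dvd: "l \<le> j \<Longrightarrow> scale l dvd scale j"
  by (induction j) (auto simp: le_Suc_eq)

text \<open>From now on the recursion is only unfolded explicitly; unfolding it automatically makes
  the simplifier expand the scales into towers of powers.\<close>
declare scale.simps(2) [simp del]

section \<open>The phase of a coin sequence\<close>

definition digit :: "nat \<Rightarrow> (nat \<Rightarrow> bool) \<Rightarrow> real" where
  "digit l w = (if w l then 1 / real (scale l) else 0)"

definition phase :: "(nat \<Rightarrow> bool) \<Rightarrow> real" where
  "phase w = (\<Sum>l. digit l w)"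

lemma digit_nonneg: "0 \<le> digit l w"
  by (simp add: digit_def)

lemma digit_shift_le: "digit (l + j) w \<le> (1/2) ^ l / real (scale j)"
proof -
  have "real (2 ^ l * scale j) \<le> real (scale (l + j))"
    using scale_growth[of l j] by linarith
  then have "1 / real (scale (l + j)) \<le> 1 / real (2 ^ l * scale j)"
    using scale_pos[of j] by (intro frac_le) auto
  also have "\<dots> = (1/2) ^ l / real (scale j)" by (simp add: power_divide)
  finally show ?thesis by (simp add: digit_def)
qed

lemma summable_digit_shift: "summable (\<lambda>l. digit (l + j) w)"
  by (rule summable_comparison_test'[where g = "\<lambda>l. (1/2) ^ l / real (scale j)" and N = 0])
     (auto simp: digit_nonneg digit_shift_le intro!: summable_divide)

lemma phase_tail_bounds:
  "0 \<le> (\<Sum>l. digit (l + j) w)" "(\<Sum>l. digit (l + j) w) \<le> 2 / real (scale j)"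
proof -
  show "0 \<le> (\<Sum>l. digit (l + j) w)"
    by (intro suminf_nonneg summable_digit_shift digit_nonneg)
  have "(\<Sum>l. digit (l + j) w) \<le> (\<Sum>l. (1/2) ^ l / real (scale j))"
    by (intro suminf_le summable_digit_shift digit_shift_le summable_divide summable_geometric) auto
  also have "\<dots> = 2 / real (scale j)" by (simp add: suminf_divide suminf_geometric)
  finally show "(\<Sum>l. digit (l + j) w) \<le> 2 / real (scale j)" .
qed

lemma phase_split:
  "phase w = (\<Sum>l<j. digit l w) + digit j w + (\<Sum>l. digit (l + Suc j) w)"
proof -
  have "phase w = (\<Sum>l. digit (l + Suc j) w) + (\<Sum>l<Suc j. digit l w)"
    unfolding phase_def using summable_digit_shift[of 0 w]
    by (intro suminf_split_initial_segment) simp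
  then show ?thesis by simp
qed

lemma phase_bounds: "0 \<le> phase w" "phase w \<le> 1/2"
  using phase_tail_bounds[of 0 w] by (simp_all add: phase_def)

text \<open>Distinct coin sequences have distinct phases: at the first disagreement \<open>j\<close> the
  digits differ by \<open>1/M\<^sub>j\<close>, while the tails differ by at most \<open>2/M\<^sub>j\<^sub>+\<^sub>1 \<le> 1/(4 M\<^sub>j)\<close>.\<close>
lemma phase_inj:
  assumes "w \<noteq> w'"
  shows "phase w \<noteq> phase w'"
proof
  assume eq: "phase w = phase w'"
  define j where "j = (LEAST j. w j \<noteq> w' j)"
  have "\<exists>j. w j \<noteq> w' j" using assms by (simp add: fun_eq_iff)
  then have wj: "w j \<noteq> w' j"
    unfolding j_def by (rule LeastI_ex)
  have "\<And>l. l < j \<Longrightarrow> w l = w' l"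
    unfolding j_def using not_less_Least by blast
  then have head: "(\<Sum>l<j. digit l w) = (\<Sum>l<j. digit l w')"
    by (intro sum.cong) (auto simp: digit_def)
  define d e where "d = 1 / real (scale j)" and "e = 2 / real (scale (Suc j))"
  define A B where "A = (\<Sum>l. digit (l + Suc j) w)" and "B = (\<Sum>l. digit (l + Suc j) w')"
  have tails: "0 \<le> A" "A \<le> e" "0 \<le> B" "B \<le> e"
    unfolding A_def B_def e_def by (rule phase_tail_bounds)+
  have "\<bar>digit j w - digit j w'\<bar> = d"
    using wj by (auto simp: digit_def d_def)
  moreover have "digit j w - digit j w' = B - A"
    using eq phase_split[of w j] phase_split[of w' j] head by (simp add: A_def B_def)
  moreover have "e < d / 2"
  proof -
    have "8 * real (scale j) \<le> real (scale (Suc j))"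
      using scale_Suc_ge[of j] by linarith
    then show ?thesis using scale_pos[of j] by (simp add: d_def e_def field_simps)
  qed
  ultimately show False using tails by linarith
qed

lemma norm_one_minus_cis_le: "norm (1 - cis y) \<le> \<bar>y\<bar>"
proof -
  have "cmod (iexp y - (\<Sum>k \<le> 0. (\<i> * y) ^ k / fact k)) \<le> \<bar>y\<bar> ^ Suc 0 / fact (Suc 0)"
    by (rule iexp_approx1)
  then show ?thesis by (simp add: cis_conv_exp norm_minus_commute)
qed

lemma (in prob_space) norm_one_minus_integral_le:
  fixes g :: "'a \<Rightarrow> complex"
  assumes g: "g \<in> borel_measurable M" "\<And>x. x \<in> space M \<Longrightarrow> norm (g x) \<le> 1"
    and S: "S \<in> events"
    and close: "\<And>x. x \<in> space M \<Longrightarrow> x \<notin> S \<Longrightarrow> norm (1 - g x) \<le> c"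
    and c: "0 \<le> c"
  shows "norm (1 - integral\<^sup>L M g) \<le> 2 * prob S + c"
proof -
  have ig: "integrable M g"
    using g by (intro integrable_const_bound[where B = 1]) auto
  have iS: "integrable M (\<lambda>x. 2 * indicator S x :: real)"
    using S by (intro integrable_mult_right integrable_real_indicator) (auto simp: less_top[symmetric])
  have "1 - integral\<^sup>L M g = (\<integral>x. 1 - g x \<partial>M)"
    using ig by (simp add: prob_space)
  then have "norm (1 - integral\<^sup>L M g) \<le> (\<integral>x. norm (1 - g x) \<partial>M)"
    by (simp add: integral_norm_bound)
  also have "\<dots> \<le> (\<integral>x. 2 * indicator S x + c \<partial>M)"
  proof (rule integral_mono)
    show "integrable M (\<lambda>x. norm (1 - g x))" using ig by auto
    show "integrable M (\<lambda>x. 2 * indicator S x + c)" using iS by auto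
    fix x assume x: "x \<in> space M"
    show "norm (1 - g x) \<le> 2 * indicator S x + c"
    proof (cases "x \<in> S")
      case True
      have "norm (1 - g x) \<le> norm (1::complex) + norm (g x)" by (rule norm_triangle_ineq4)
      then show ?thesis using True g(2)[OF x] c by simp
    next
      case False
      then show ?thesis using close[OF x] by simp
    qed
  qed
  also have "\<dots> = 2 * prob S + c"
    using iS S by (simp add: prob_space)
  finally show ?thesis .
qed

section \<open>The measure \<open>\<sigma>\<close>\<close>

definition coin_prob :: "nat \<Rightarrow> real" where
  "coin_prob l = 1 / real (l + 2)"

definition coin :: "nat \<Rightarrow> bool measure" where
  "coin l = measure_pmf (bernoulli_pmf (coin_prob l))"

definition coins :: "(nat \<Rightarrow> bool) measure" where
  "coins = PiM UNIV coin"

definition point :: "(nat \<Rightarrow> bool) \<Rightarrow> complex" where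
  "point w = cis (2 * pi * phase w)"

definition sigma :: "complex measure" where
  "sigma = distr coins borel point"

lemma coin_prob_bounds: "0 \<le> coin_prob l" "coin_prob l \<le> 1/2"
  by (auto simp: coin_prob_def)

lemma coins_product: "product_prob_space coin"
  unfolding product_prob_space_def product_prob_space_axioms_def product_sigma_finite_def
  by (auto simp: coin_def prob_space_measure_pmf prob_space_imp_sigma_finite)

interpretation coins: prob_space coins
  unfolding coins_def coin_def by (intro prob_space_PiM prob_space_measure_pmf)

lemma sets_coins_coord: "{w \<in> space coins. w l \<in> A} \<in> sets coins"
  using measurable_sets[OF measurable_component_singleton[of l UNIV coin], of A]
  by (simp add: coins_def coin_def vimage_def Int_def conj_commute)

lemma measurable_phase: "phase \<in> borel_measurable coins"
proof -
  have "(\<lambda>w. w l) \<in> measurable coins (coin l)" for l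
    unfolding coins_def by (rule measurable_component_singleton) simp
  from measurable_compose[OF this, of "\<lambda>b. if b then 1 / real (scale l) else 0" l for l]
  have "(\<lambda>w. digit l w) \<in> borel_measurable coins" for l
    by (simp add: digit_def coin_def)
  then show ?thesis
    unfolding phase_def[abs_def] by (rule borel_measurable_suminf)
qed

lemma measurable_point: "point \<in> borel_measurable coins"
  unfolding point_def[abs_def]
  by (rule borel_measurable_continuous_on[where f = "\<lambda>x. cis (2 * pi * x)", OF _ measurable_phase])
     (intro continuous_intros)

lemma sigma_circle: "circle_prob_measure sigma"
proof -
  have "emeasure sigma (sphere 0 1) = emeasure coins (point -` sphere 0 1 \<inter> space coins)"
    unfolding sigma_def by (rule emeasure_distr[OF measurable_point]) (simp add: borel_closed)
  also have "point -` sphere 0 1 \<inter> space coins = space coins" by (auto simp: point_def)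
  finally show ?thesis
    unfolding circle_prob_measure_def sigma_def
    by (simp add: coins.prob_space_distr measurable_point coins.emeasure_space_1)
qed

text \<open>Since the phase lies in \<open>[0, 1/2]\<close>, distinct phases give distinct points.\<close>
lemma point_inj: "inj point"
proof
  fix w w' assume "point w = point w'"
  then have "cis (2 * pi * (phase w - phase w')) = 1"
    by (simp add: point_def cis_divide[symmetric] right_diff_distrib)
  then have "cos (2 * pi * (phase w - phase w')) = 1"
    by (metis cis.sel(1) one_complex.sel(1))
  then obtain m :: int where m: "2 * pi * (phase w - phase w') = m * 2 * pi"
    by (auto simp: cos_one_2pi_int)
  then have "phase w - phase w' = m" by simp
  moreover have "\<bar>phase w - phase w'\<bar> \<le> 1/2"
    using phase_bounds[of w] phase_bounds[of w'] by linarith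
  ultimately have "\<bar>real_of_int m\<bar> < 1" by simp
  then have "m = 0" by linarith
  then have "phase w = phase w'" using \<open>phase w - phase w' = m\<close> by simp
  then show "w = w'" using phase_inj by blast
qed

lemma prod_one_minus_coin_prob: "(\<Prod>l<L. 1 - coin_prob l) = 1 / real (Suc L)"
  by (induction L) (simp_all add: coin_prob_def field_simps)

lemma cylinder_small:
  "emeasure coins {w \<in> space coins. \<forall>l\<in>{..<L}. w l \<in> {v l}} \<le> ennreal (1 / real (Suc L))"
proof -
  interpret product_prob_space coin UNIV by (rule coins_product)
  have "emeasure coins {w \<in> space coins. \<forall>l\<in>{..<L}. w l \<in> {v l}}
      = (\<Prod>l<L. ennreal (pmf (bernoulli_pmf (coin_prob l)) (v l)))"
    unfolding coins_def by (subst emeasure_PiM_Collect) (auto simp: coin_def emeasure_pmf_single)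
  also have "\<dots> = ennreal (\<Prod>l<L. pmf (bernoulli_pmf (coin_prob l)) (v l))"
    by (simp add: prod_ennreal)
  also have "\<dots> \<le> ennreal (\<Prod>l<L. 1 - coin_prob l)"
  proof (intro ennreal_leI prod_mono conjI)
    fix l
    show "0 \<le> pmf (bernoulli_pmf (coin_prob l)) (v l)" by simp
    show "pmf (bernoulli_pmf (coin_prob l)) (v l) \<le> 1 - coin_prob l"
      using coin_prob_bounds[of l] by (cases "v l") auto
  qed
  finally show ?thesis by (simp add: prod_one_minus_coin_prob)
qed

text \<open>An atom of \<open>\<sigma>\<close> has a single coin sequence as preimage, which lies in cylinders
  of arbitrarily small probability.\<close>
lemma sigma_continuous: "continuous_measure sigma"
  unfolding continuous_measure_def
proof
  fix z :: complex
  have atom: "emeasure sigma {z} = emeasure coins (point -` {z} \<inter> space coins)"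
    unfolding sigma_def by (rule emeasure_distr[OF measurable_point]) simp
  show "emeasure sigma {z} = 0"
  proof (cases "z \<in> range point")
    case False
    then have "point -` {z} = {}" by auto
    then show ?thesis using atom by simp
  next
    case True
    then obtain v where z: "z = point v" by auto
    have "emeasure sigma {z} \<le> ennreal (1 / real (Suc L))" for L
    proof -
      have "point -` {z} \<inter> space coins \<subseteq> {w \<in> space coins. \<forall>l\<in>{..<L}. w l \<in> {v l}}"
        using point_inj z by (auto dest: injD)
      moreover have "{w \<in> space coins. \<forall>l\<in>{..<L}. w l \<in> {v l}} \<in> sets coins"
        by (intro sets.sets_Collect_finite_All sets_coins_coord) auto
      ultimately have "emeasure coins (point -` {z} \<inter> space coins)
          \<le> emeasure coins {w \<in> space coins. \<forall>l\<in>{..<L}. w l \<in> {v l}}"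
        by (rule emeasure_mono)
      then show ?thesis using atom cylinder_small[of L v] by simp
    qed
    moreover have "(\<lambda>L. ennreal (1 / real (Suc L))) \<longlonglongrightarrow> ennreal 0"
      by (intro tendsto_ennrealI) (use LIMSEQ_inverse_real_of_nat in \<open>simp add: inverse_eq_divide\<close>)
    ultimately have "emeasure sigma {z} \<le> ennreal 0"
      by (intro LIMSEQ_le_const) auto
    then show ?thesis by simp
  qed
qed

section \<open>Fourier coefficients of \<open>\<sigma>\<close> at multiples of a scale\<close>

lemma fourier_coeff_sigma: "fourier_coeff sigma n = (\<integral>w. cis (real n * (2 * pi * phase w)) \<partial>coins)"
proof -
  have "fourier_coeff sigma n = (\<integral>w. point w ^ n \<partial>coins)"
    unfolding fourier_coeff_def sigma_def
    by (rule integral_distr[OF measurable_point]) (intro borel_measurable_continuous_onI continuous_intros)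
  then show ?thesis by (simp add: point_def Complex.DeMoivre)
qed

text \<open>If \<open>M\<^sub>i\<close> divides \<open>n\<close> and coin \<open>i+1\<close> shows tails, then \<open>n \<cdot> phase\<close> is an integer
  plus \<open>n\<close> times the tail beyond \<open>i+1\<close>.\<close>
lemma cis_phase_close:
  assumes dvd: "scale i dvd n" and tails: "\<not> w (Suc i)"
  shows "norm (1 - cis (real n * (2 * pi * phase w))) \<le> 2 * pi * real n * (2 / real (scale (Suc (Suc i))))"
proof -
  define T where "T = (\<Sum>l. digit (l + Suc (Suc i)) w)"
  define m where "m = (\<Sum>l<Suc i. if w l then n div scale l else 0)"
  have "real n * (\<Sum>l<Suc i. digit l w) = (\<Sum>l<Suc i. real (if w l then n div scale l else 0))"
    unfolding sum_distrib_left
  proof (rule sum.cong)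
    fix l assume "l \<in> {..<Suc i}"
    then have "scale l dvd n" using scale_dvd[of l i] dvd by (auto intro: dvd_trans)
    then show "real n * digit l w = real (if w l then n div scale l else 0)"
      by (simp add: digit_def real_of_nat_div)
  qed simp
  then have integer_part: "real n * (\<Sum>l<Suc i. digit l w) = real m" by (simp add: m_def)
  have "phase w = (\<Sum>l<Suc i. digit l w) + T"
    using phase_split[of w "Suc i"] tails by (simp add: digit_def T_def)
  then have "real n * (2 * pi * phase w) = 2 * pi * real m + 2 * pi * (real n * T)"
    using integer_part by (simp add: algebra_simps del: sum.lessThan_Suc)
  then have cis_eq: "cis (real n * (2 * pi * phase w)) = cis (2 * pi * (real n * T))"
    by (simp add: cis_mult[symmetric] cis_multiple_2pi)
  have "0 \<le> T" "T \<le> 2 / real (scale (Suc (Suc i)))"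
    unfolding T_def by (rule phase_tail_bounds)+
  moreover have "norm (1 - cis (2 * pi * (real n * T))) \<le> 2 * pi * real n * T"
    using norm_one_minus_cis_le[of "2 * pi * (real n * T)"] \<open>0 \<le> T\<close> by simp
  moreover have "2 * pi * real n * T \<le> 2 * pi * real n * (2 / real (scale (Suc (Suc i))))"
    using \<open>T \<le> 2 / real (scale (Suc (Suc i)))\<close> by (intro mult_left_mono) auto
  ultimately show ?thesis unfolding cis_eq by linarith
qed

lemma fourier_sigma_close:
  assumes "scale i dvd n"
  shows "norm (1 - fourier_coeff sigma n)
           \<le> 2 * coin_prob (Suc i) + 2 * pi * real n * (2 / real (scale (Suc (Suc i))))"
proof -
  define S where "S = {w \<in> space coins. w (Suc i) \<in> {True}}"
  have S: "S \<in> sets coins" unfolding S_def by (rule sets_coins_coord)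
  have prob_S: "coins.prob S = coin_prob (Suc i)"
  proof -
    interpret product_prob_space coin UNIV by (rule coins_product)
    have "emeasure coins S = emeasure (coin (Suc i)) {True}"
      unfolding S_def coins_def by (rule emeasure_PiM_Collect_single) (auto simp: coin_def)
    then show ?thesis
      using coin_prob_bounds[of "Suc i"] by (simp add: coin_def emeasure_pmf_single measure_def)
  qed
  have meas: "(\<lambda>w. cis (real n * (2 * pi * phase w))) \<in> borel_measurable coins"
    by (rule borel_measurable_continuous_on[where f = "\<lambda>x. cis (real n * (2 * pi * x))",
          OF _ measurable_phase]) (intro continuous_intros)
  have "norm (1 - fourier_coeff sigma n)
          \<le> 2 * coins.prob S + 2 * pi * real n * (2 / real (scale (Suc (Suc i))))"
    unfolding fourier_coeff_sigma
  proof (rule coins.norm_one_minus_integral_le[OF meas _ S])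
    fix w assume "w \<in> space coins" "w \<notin> S"
    then have "\<not> w (Suc i)" by (simp add: S_def)
    then show "norm (1 - cis (real n * (2 * pi * phase w)))
                 \<le> 2 * pi * real n * (2 / real (scale (Suc (Suc i))))"
      using assms by (rule cis_phase_close[rotated])
  qed simp_all
  then show ?thesis by (simp only: prob_S)
qed

section \<open>The sequence\<close>

definition block_start :: "nat \<Rightarrow> nat" where
  "block_start i = 2 ^ i * scale i"

text \<open>The state \<open>(i, n)\<close>: the current block and the current term; step by \<open>M\<^sub>i\<close>, and move
  to the next block on reaching its start.\<close>
primrec walk :: "nat \<Rightarrow> nat \<times> nat" where
  "walk 0 = (0, block_start 0)"
| "walk (Suc k) = (let (i, n) = walk k in
     (if n + scale i = block_start (Suc i) then Suc i else i, n + scale i))"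

definition level :: "nat \<Rightarrow> nat" where
  "level k = fst (walk k)"

definition nseq :: "nat \<Rightarrow> nat" where
  "nseq k = snd (walk k)"

lemma nseq_Suc: "nseq (Suc k) = nseq k + scale (level k)"
  by (simp add: nseq_def level_def split: prod.split)

lemma level_Suc:
  "level (Suc k) = (if nseq k + scale (level k) = block_start (Suc (level k)) then Suc (level k) else level k)"
  by (simp add: nseq_def level_def split: prod.split)

lemma block_start_less: "block_start i < block_start (Suc i)"
  using scale_Suc_ge[of i] scale_pos[of i] by (simp add: block_start_def)

lemma block_start_mono: "i \<le> j \<Longrightarrow> block_start i \<le> block_start j"
  by (induction j) (auto simp: le_Suc_eq intro: order_trans less_imp_le[OF block_start_less])

lemma dvd_next_multiple_le:
  fixes a n b :: nat
  assumes "a dvd n" "n < b" "a dvd b"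
  shows "n + a \<le> b"
proof -
  obtain x y where x: "n = a * x" and y: "b = a * y" using assms(1,3) by (auto elim!: dvdE)
  then have "x < y" using assms(2) by (metis mult_less_cancel1)
  then have "a * (x + 1) \<le> a * y" by (intro mult_le_mono2) simp
  then show ?thesis using x y by simp
qed

lemma walk_invariant:
  "scale (level k) dvd nseq k \<and> block_start (level k) \<le> nseq k \<and> nseq k < block_start (Suc (level k))"
proof (induction k)
  case 0
  show ?case using block_start_less[of 0] by (simp add: level_def nseq_def block_start_def)
next
  case (Suc k)
  define i n where "i = level k" and "n = nseq k"
  have I: "scale i dvd n" "block_start i \<le> n" "n < block_start (Suc i)"
    using Suc by (auto simp: i_def n_def)
  have "scale i dvd block_start (Suc i)" by (simp add: block_start_def scale.simps(2))
  with I(1,3) have "n + scale i \<le> block_start (Suc i)"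
    by (rule dvd_next_multiple_le)
  then show ?case
    using I block_start_less[of "Suc i"]
    by (auto simp: level_Suc nseq_Suc block_start_def i_def[symmetric] n_def[symmetric])
qed

lemma nseq_strict_mono: "strict_mono nseq"
  unfolding strict_mono_Suc_iff using scale_pos by (simp add: nseq_Suc)

lemma nseq_pos: "0 < nseq k"
proof -
  have "0 < block_start (level k)" by (simp add: block_start_def scale_pos)
  moreover have "block_start (level k) \<le> nseq k" using walk_invariant[of k] by blast
  ultimately show ?thesis by linarith
qed

text \<open>Every block is finite, so the block index tends to infinity.\<close>
lemma level_tendsto: "filterlim level at_top sequentially"
  unfolding filterlim_at_top eventually_sequentially
proof (intro allI exI impI)
  fix I k assume k: "block_start I \<le> k"
  show "I \<le> level k"
  proof (rule ccontr)
    assume "\<not> I \<le> level k"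
    then have "nseq k < block_start I"
      using walk_invariant[of k] block_start_mono[of "Suc (level k)" I] by linarith
    then show False using k seq_suble[OF nseq_strict_mono, of k] by linarith
  qed
qed

text \<open>In block \<open>i\<close> the step \<open>M\<^sub>i\<close> is at most a \<open>2\<^sup>-\<^sup>i\<close> fraction of the current term.\<close>
lemma nseq_ratio_bound: "\<bar>real (nseq (Suc k)) / real (nseq k) - 1\<bar> \<le> (1/2) ^ level k"
proof -
  define i n where "i = level k" and "n = nseq k"
  have lower: "real (2 ^ i * scale i) \<le> real n"
    using walk_invariant[of k] unfolding i_def n_def block_start_def by linarith
  have "real (nseq (Suc k)) / real n - 1 = real (scale i) / real n"
    using nseq_pos[of k] by (simp add: nseq_Suc i_def n_def field_simps)
  moreover have "real (scale i) / real n \<le> real (scale i) / real (2 ^ i * scale i)"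
    using lower scale_pos[of i] by (intro frac_le) auto
  ultimately show ?thesis
    using scale_pos[of i] by (simp add: n_def i_def power_divide)
qed

lemma nseq_over_scale: "real (nseq k) / real (scale (Suc (Suc (level k)))) \<le> (1/2) ^ level k"
proof -
  define i where "i = level k"
  have "(2::nat) ^ Suc i * 2 ^ i \<le> 2 ^ (2 * Suc i + 3)"
    unfolding power_add[symmetric] by (rule power_increasing) auto
  then have "(2 ^ Suc i * 2 ^ i) * scale (Suc i) \<le> 2 ^ (2 * Suc i + 3) * scale (Suc i)"
    by (rule mult_le_mono1)
  then have "block_start (Suc i) * 2 ^ i \<le> scale (Suc (Suc i))"
    by (simp add: block_start_def scale.simps(2) ac_simps)
  moreover have "nseq k < block_start (Suc i)"
    using walk_invariant[of k] by (simp add: i_def)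
  ultimately have "nseq k * 2 ^ i \<le> scale (Suc (Suc i))"
    by (meson less_imp_le_nat mult_le_mono1 order_trans)
  then have "real (nseq k) * 2 ^ i \<le> real (scale (Suc (Suc i)))"
    by (metis of_nat_le_iff of_nat_mult of_nat_numeral of_nat_power)
  then show ?thesis
    using scale_pos[of "Suc (Suc i)"] by (simp add: i_def field_simps power_divide)
qed

lemma fourier_nseq_bound:
  "norm (fourier_coeff sigma (nseq k) - 1) \<le> 2 / real (Suc (Suc (Suc (level k)))) + 4 * pi * (1/2) ^ level k"
proof -
  define i where "i = level k"
  have "norm (1 - fourier_coeff sigma (nseq k))
          \<le> 2 * coin_prob (Suc i) + 2 * pi * real (nseq k) * (2 / real (scale (Suc (Suc i))))"
    using walk_invariant[of k] unfolding i_def by (intro fourier_sigma_close) auto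
  also have "\<dots> = 2 / real (Suc (Suc (Suc i))) + 4 * pi * (real (nseq k) / real (scale (Suc (Suc i))))"
    by (simp add: coin_prob_def field_simps)
  also have "\<dots> \<le> 2 / real (Suc (Suc (Suc i))) + 4 * pi * (1/2) ^ i"
    using nseq_over_scale[of k] unfolding i_def by (intro add_left_mono mult_left_mono) auto
  finally show ?thesis by (simp add: norm_minus_commute i_def)
qed

lemma fourier_nseq_tendsto: "(\<lambda>k. fourier_coeff sigma (nseq k)) \<longlonglongrightarrow> 1"
proof (rule LIM_zero_cancel)
  define G :: "nat \<Rightarrow> real" where "G i = 2 / real (Suc (Suc (Suc i))) + 4 * pi * (1/2) ^ i" for i
  have "G \<longlonglongrightarrow> 0"
    using LIMSEQ_Suc[OF LIMSEQ_Suc[OF LIMSEQ_Suc[OF lim_const_over_n[of 2]]]]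
    unfolding G_def by (intro tendsto_add_zero tendsto_mult_right_zero LIMSEQ_realpow_zero) auto
  then have "(\<lambda>k. G (level k)) \<longlonglongrightarrow> 0" by (rule filterlim_compose[OF _ level_tendsto])
  then show "(\<lambda>k. fourier_coeff sigma (nseq k) - 1) \<longlonglongrightarrow> 0"
    by (rule Lim_null_comparison[rotated]) (use fourier_nseq_bound in \<open>auto simp: G_def\<close>)
qed

lemma nseq_ratio_tendsto: "(\<lambda>k. real (nseq (Suc k)) / real (nseq k)) \<longlonglongrightarrow> 1"
proof (rule LIM_zero_cancel)
  have "(\<lambda>k. (1/2::real) ^ level k) \<longlonglongrightarrow> 0"
    by (rule filterlim_compose[OF LIMSEQ_realpow_zero level_tendsto]) auto
  then show "(\<lambda>k. real (nseq (Suc k)) / real (nseq k) - 1) \<longlonglongrightarrow> 0"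
    by (rule Lim_null_comparison[rotated]) (use nseq_ratio_bound in auto)
qed

theorem mainTheorem16:
  shows "\<exists>nk :: nat \<Rightarrow> nat. strict_mono nk \<and> (\<forall>k. 0 < nk k) \<and>
           (\<lambda>k. real (nk (Suc k)) / real (nk k)) \<longlonglongrightarrow> 1 \<and>
           rigidity_sequence nk"
proof (intro exI conjI allI)
  show "strict_mono nseq" by (rule nseq_strict_mono)
  show "0 < nseq k" for k by (rule nseq_pos)
  show "(\<lambda>k. real (nseq (Suc k)) / real (nseq k)) \<longlonglongrightarrow> 1" by (rule nseq_ratio_tendsto)
  show "rigidity_sequence nseq"
    unfolding rigidity_sequence_def
    using nseq_strict_mono nseq_pos sigma_circle sigma_continuous fourier_nseq_tendsto by blast
qed

end
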